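(* Let $n\ge 2$, $0<k\le\lfloor n/2\rfloor$, $m_1,\dots,m_n\in\mathbb{R}$, and let $\mathcal{M}(t)$ be the $n\times n$ matrix whose first $k$ rows are $\big(e^{-m_1t}m_1^{r},\dots,e^{-m_nt}m_n^{r}\big)$ for $r=0,1,\dots,k-1$ and whose last $n-k$ rows are $\big(m_1^{s},\dots,m_n^{s}\big)$ for $s=0,1,\dots,n-k-1$. Then the power series of $\det\mathcal{M}(t)$ about $t=0$ has no terms of degree less than $k(n-k)$ and begins $$\det\mathcal{M}(t)=\frac{\varepsilon_{k,n}V}{(k(n-k))!}\,c_0\,t^{k(n-k)}+\dots,$$ where $V=\prod_{1\le i<j\le n}(m_i-m_j)$, $\varepsilon_{k,n}=(-1)^{k(n-k)+\sigma(k)+\sigma(n-k)}$, and $$c_0=(k(n-k))!\prod_{i=1}^{k}\frac{(i-1)!}{(n-k+i-1)!}.$$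
   Context: $\sigma:\mathbb{Z}\to\{0,1\}$ is defined by $\sigma(N)=0$ if $N\equiv 0,1\pmod 4$ and $\sigma(N)=1$ if $N\equiv 2,3\pmod 4$. *)

theory Defs
  imports "HOL-Analysis.Analysis" "Jordan_Normal_Form.Determinant"
begin

definition sigma :: "int \<Rightarrow> nat" where
  "sigma N = (if N mod 4 \<in> {0, 1} then 0 else 1)"

text \<open>The n x n matrix M(t); rows/columns 0-indexed, m indexed 1..n.
 Row r < k: entries exp(-m_j t) m_j^r; row k+s: entries m_j^s.\<close>
definition Mmat :: "nat \<Rightarrow> nat \<Rightarrow> (nat \<Rightarrow> real) \<Rightarrow> real \<Rightarrow> real mat" where
  "Mmat n k m t = Matrix.mat n n (\<lambda>(i, j).
      if i < k then exp (- m (Suc j) * t) * m (Suc j) ^ i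
      else m (Suc j) ^ (i - k))"

definition Vand :: "nat \<Rightarrow> (nat \<Rightarrow> real) \<Rightarrow> real" where
  "Vand n m = (\<Prod>i\<in>{1..n}. \<Prod>j\<in>{i<..n}. (m i - m j))"

definition eps_kn :: "nat \<Rightarrow> nat \<Rightarrow> real" where
  "eps_kn k n = (-1) ^ (k * (n - k) + sigma (int k) + sigma (int (n - k)))"

definition c0 :: "nat \<Rightarrow> nat \<Rightarrow> real" where
  "c0 k n = fact (k * (n - k)) * (\<Prod>i\<in>{1..k}. fact (i - 1) / fact (n - k + i - 1))"

end

theory Submission
  imports Defs
begin

(* Expanding det M(t) over permutations and each exp(-m_j t) into its power series, the coefficient of
   t^j becomes a sum, over multisets X of size j supported on the first k rows, of generalized
   Vandermonde determinants in which row i < k carries the exponent i + (multiplicity of i in X).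
   Such a determinant vanishes unless all n exponents are distinct. The last n - k rows already use
   the exponents 0, ..., n - k - 1, so each of the first k exponents is at least n - k, and their sum
   k(k-1)/2 + j is therefore at least that of n - k, ..., n - 1; this forces j >= k(n - k).
   For j = k(n - k) the first k exponents are a permutation q of n - k, ..., n - 1, each surviving
   term is sign(q) (-1)^(k(n-k)) times the ordinary Vandermonde determinant, and the weighted sum over
   q is the determinant of the matrix (1/(n - k + b - a)!)_{a,b<k}, which equals
   prod_{b<k} b!/(n - k + b)!. The sign (-1)^(n(n-1)/2) relating V to the Vandermonde determinant
   with increasing exponents is exactly epsilon_{k,n}. *)

lemma prod_diff_swap:
  fixes a b :: "'b \<Rightarrow> 'a::comm_ring_1"
  shows "(\<Prod>j\<in>A. a j - b j) = (-1) ^ card A * (\<Prod>j\<in>A. b j - a j)"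
proof -
  have "(\<Prod>j\<in>A. a j - b j) = (\<Prod>j\<in>A. (-1) * (b j - a j))" by simp
  then show ?thesis by (simp only: prod.distrib prod_constant)
qed

lemma prod_pairs_lessThan_Suc:
  "(\<Prod>i<Suc n. \<Prod>j\<in>{i<..<Suc n}. g i j) = (\<Prod>i<n. \<Prod>j\<in>{i<..<n}. g i j) * (\<Prod>i<n. g i n)"
proof -
  have "{i<..<Suc n} = (if i < n then insert n {i<..<n} else {})" for i
    by auto
  then show ?thesis
    by (simp add: prod.distrib mult.commute)
qed

lemma prod_pairs_diff_swap:
  fixes y :: "nat \<Rightarrow> 'a::comm_ring_1"
  shows "(\<Prod>i<n. \<Prod>j\<in>{i<..<n}. y i - y j) = (-1) ^ (\<Sum>i<n. i) * (\<Prod>i<n. \<Prod>j\<in>{i<..<n}. y j - y i)"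
proof (induction n)
  case (Suc n)
  then show ?case
    unfolding prod_pairs_lessThan_Suc prod_diff_swap[of y "\<lambda>_. y n" "{..<n}"]
    by (simp add: power_add)
qed simp

lemma prod_pairs_diff_of_nat:
  "(\<Prod>a<k. \<Prod>b\<in>{a<..<k}. of_nat b - of_nat a) = (\<Prod>b<k. fact b :: 'a::{comm_ring_1,semiring_char_0})"
proof (induction k)
  case (Suc k)
  have "(\<Prod>a<k. of_nat k - of_nat a) = (fact k :: 'a)"
    by (simp add: fact_prod_rev atLeast0LessThan of_nat_diff)
  with Suc show ?case unfolding prod_pairs_lessThan_Suc by simp
qed simp

lemma sum_lessThan_add: "(\<Sum>i<k + N. i) = (\<Sum>i<k. i) + k * N + (\<Sum>i<N. i :: nat)"
  by (induction N) simp_all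

lemma even_sum_lessThan_iff: "even (\<Sum>i<a. i) \<longleftrightarrow> a mod 4 \<in> {0, 1::nat}"
proof (induction a)
  case (Suc a)
  then show ?case by simp presburger
qed simp

lemma minus_one_power_sum_lessThan: "(-1::'a::ring_1) ^ (\<Sum>i<a. i) = (-1) ^ sigma (int a)"
proof -
  have "int a mod 4 \<in> {0, 1} \<longleftrightarrow> a mod 4 \<in> {0, 1}"
    by simp presburger
  then show ?thesis
    by (simp add: sigma_def minus_one_power_iff even_sum_lessThan_iff del: insert_iff)
qed

lemma sum_ge_sum_consecutive:
  fixes T :: "nat set"
  assumes "finite T" and "card T = k" and "\<forall>t\<in>T. N \<le> t"
  shows "(\<Sum>i<k. N + i) \<le> \<Sum>T \<and> (\<Sum>T = (\<Sum>i<k. N + i) \<longrightarrow> T = {N..<N + k})"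
  using assms
proof (induction k arbitrary: T)
  case (Suc k)
  define M where "M = Max T"
  have MT: "M \<in> T" and Mmax: "\<forall>t\<in>T. t \<le> M"
    using Suc.prems card_gt_0_iff[of T] by (auto simp: M_def)
  have IH: "(\<Sum>i<k. N + i) \<le> \<Sum>(T - {M}) \<and> (\<Sum>(T - {M}) = (\<Sum>i<k. N + i) \<longrightarrow> T - {M} = {N..<N + k})"
    using Suc MT by (intro Suc.IH) auto
  have "Suc k \<le> card {N..M}"
    using card_mono[of "{N..M}" T] Suc.prems Mmax by (auto simp: subset_iff)
  then have "N + k \<le> M" by simp
  moreover have "\<Sum>T = M + \<Sum>(T - {M})"
    using Suc.prems MT by (simp add: sum.remove)
  moreover have "(\<Sum>i<Suc k. N + i) = (\<Sum>i<k. N + i) + (N + k)" by simp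
  ultimately have "(\<Sum>i<Suc k. N + i) \<le> \<Sum>T"
    and "\<Sum>T = (\<Sum>i<Suc k. N + i) \<Longrightarrow> M = N + k \<and> \<Sum>(T - {M}) = (\<Sum>i<k. N + i)"
    using IH by linarith+
  moreover have "T = insert M (T - {M})" using MT by blast
  ultimately show ?case
    using IH by (metis atLeastLessThanSuc add_Suc_right le_add1)
qed simp

lemma sum_count_eq_size:
  assumes "finite A" and "set_mset X \<subseteq> A"
  shows "(\<Sum>i\<in>A. count X i) = size X"
proof -
  have "(\<Sum>i\<in>A. count X i) = sum (count X) (set_mset X)"
    using assms by (intro sum.mono_neutral_right) (auto simp: not_in_iff)
  then show ?thesis by (simp add: size_multiset_overloaded_eq)
qed

lemma prod_neg_power_div_fact:
  fixes a :: "nat \<Rightarrow> 'a::field_char_0"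
  shows "(\<Prod>i\<in>A. (- a i) ^ c i / fact (c i))
       = (-1) ^ (\<Sum>i\<in>A. c i) * (\<Prod>i\<in>A. a i ^ c i) / (\<Prod>i\<in>A. fact (c i))"
proof -
  have "(\<Prod>i\<in>A. (- a i) ^ c i / fact (c i)) = (\<Prod>i\<in>A. (-1) ^ c i * a i ^ c i / fact (c i))"
    by (intro prod.cong refl) (subst power_minus, rule refl)
  then show ?thesis
    by (simp only: prod_dividef prod.distrib power_sum)
qed

section \<open>Vandermonde-type determinants\<close>

lemma det_mult_cols:
  fixes f :: "nat \<Rightarrow> nat \<Rightarrow> 'a::comm_ring_1"
  shows "det (mat n n (\<lambda>(i,j). f i j * d j)) = (\<Prod>j<n. d j) * det (mat n n (\<lambda>(i,j). f i j))"
proof -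
  have "det (mat n n (\<lambda>(i,j). f i j * d j))
      = (\<Sum>p\<in>{p. p permutes {0..<n}}. signof p * ((\<Prod>i=0..<n. f i (p i)) * (\<Prod>i=0..<n. d (p i))))"
    unfolding det_def by (auto intro!: sum.cong prod.cong simp: prod.distrib permutes_def)
  also have "\<dots> = (\<Sum>p\<in>{p. p permutes {0..<n}}. (\<Prod>j<n. d j) * (signof p * (\<Prod>i=0..<n. f i (p i))))"
  proof (intro sum.cong refl)
    fix p assume "p \<in> {p. p permutes {0..<n}}"
    then have "(\<Prod>i=0..<n. d (p i)) = (\<Prod>j<n. d j)"
      using prod.permute[of p "{0..<n}" d] by (simp add: atLeast0LessThan)
    then show "signof p * ((\<Prod>i=0..<n. f i (p i)) * (\<Prod>i=0..<n. d (p i))) =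
      (\<Prod>j<n. d j) * (signof p * (\<Prod>i=0..<n. f i (p i)))" by simp
  qed
  also have "\<dots> = (\<Prod>j<n. d j) * det (mat n n (\<lambda>(i,j). f i j))"
    unfolding det_def by (simp add: sum_distrib_left)
  finally show ?thesis .
qed

lemma det_unit_lower_triangular:
  assumes "A \<in> carrier_mat n n" and "\<And>i j. i < j \<Longrightarrow> j < n \<Longrightarrow> A $$ (i,j) = 0"
    and "\<And>i. i < n \<Longrightarrow> A $$ (i,i) = (1::'a::comm_ring_1)"
  shows "det A = 1"
proof -
  have "det A = prod_list (diag_mat A)"
    using assms(2,1) by (rule det_lower_triangular)
  also have "diag_mat A = replicate n 1"
    using assms(1,3) by (intro nth_equalityI) (auto simp: diag_mat_def)
  finally show ?thesis by simp
qed

lemma det_vandermonde: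
  fixes y :: "nat \<Rightarrow> 'a::comm_ring_1"
  shows "det (mat n n (\<lambda>(i,j). y j ^ i)) = (\<Prod>i<n. \<Prod>j\<in>{i<..<n}. y j - y i)"
proof (induction n)
  case 0
  show ?case by (simp add: det_def sign_def)
next
  case (Suc n)
  define A where "A = mat (Suc n) (Suc n) (\<lambda>(i,j). y j ^ i)"
  define L where "L = mat (Suc n) (Suc n)
    (\<lambda>(i,l). if l = i then 1 else if Suc l = i then - y n else (0::'a))"
  define B where "B = mat (Suc n) (Suc n)
    (\<lambda>(i,j). if i = 0 then 1 else y j ^ (i - 1) * (y j - y n))"
  have LA: "L * A = B"
  proof (rule eq_matI)
    fix i j assume "i < dim_row B" and "j < dim_col B"
    then have ij: "i < Suc n" "j < Suc n" by (auto simp: B_def)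
    have "(L * A) $$ (i,j)
        = (\<Sum>l<Suc n. (if l = i then y j ^ l else 0) + (if Suc l = i then - y n * y j ^ l else 0))"
      using ij by (auto simp: L_def A_def scalar_prod_def atLeast0LessThan intro!: sum.cong)
    also have "\<dots> = B $$ (i,j)"
      using ij by (cases i) (auto simp: sum.distrib B_def algebra_simps, metis Suc_lessI power_Suc)
    finally show "(L * A) $$ (i,j) = B $$ (i,j)" .
  qed (auto simp: L_def A_def B_def)
  have "det L = 1"
    by (rule det_unit_lower_triangular[of _ "Suc n"]) (auto simp: L_def)
  then have "det A = det B"
    using det_mult[of L "Suc n" A] LA by (simp add: L_def A_def)
  also have "\<dots> = (\<Sum>i<Suc n. B $$ (i,n) * cofactor B i n)"
    by (rule laplace_expansion_column[of _ "Suc n"]) (simp_all add: B_def)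
  also have "\<dots> = (-1)^n * det (mat_delete B 0 n)"
    by (simp add: B_def cofactor_def sum.lessThan_Suc_shift del: sum.lessThan_Suc)
  also have "mat_delete B 0 n = mat n n (\<lambda>(i,j). y j ^ i * (y j - y n))"
    by (rule eq_matI) (auto simp: mat_delete_def B_def)
  also have "det \<dots> = (\<Prod>j<n. y j - y n) * (\<Prod>i<n. \<Prod>j\<in>{i<..<n}. y j - y i)"
    using Suc.IH by (simp add: det_mult_cols)
  finally show ?case
    unfolding A_def prod_pairs_lessThan_Suc prod_diff_swap[of y "\<lambda>_. y n" "{..<n}"]
    by (simp add: ac_simps)
qed

lemma det_poly_rows_monic:
  fixes P :: "nat \<Rightarrow> 'a::comm_ring_1 poly"
  assumes deg: "\<And>i. degree (P i) = i" and lc: "\<And>i. lead_coeff (P i) = 1"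
  shows "det (mat n n (\<lambda>(i,j). poly (P i) (y j))) = det (mat n n (\<lambda>(i,j). y j ^ i))"
proof -
  define C where "C = mat n n (\<lambda>(i,l). coeff (P i) l)"
  define V where "V = mat n n (\<lambda>(i,j). y j ^ i)"
  have "C * V = mat n n (\<lambda>(i,j). poly (P i) (y j))"
  proof (rule eq_matI)
    fix i j assume "i < dim_row (mat n n (\<lambda>(i,j). poly (P i) (y j)))"
      "j < dim_col (mat n n (\<lambda>(i,j). poly (P i) (y j)))"
    then have ij: "i < n" "j < n" by auto
    have "(C * V) $$ (i,j) = (\<Sum>l<n. coeff (P i) l * y j ^ l)"
      using ij by (simp add: C_def V_def scalar_prod_def atLeast0LessThan)
    also have "\<dots> = (\<Sum>l\<le>degree (P i). coeff (P i) l * y j ^ l)"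
      using deg[of i] ij by (intro sum.mono_neutral_right) (auto simp: coeff_eq_0)
    also have "\<dots> = poly (P i) (y j)" by (simp add: poly_altdef)
    finally show "(C * V) $$ (i,j) = mat n n (\<lambda>(i,j). poly (P i) (y j)) $$ (i,j)"
      using ij by simp
  qed (auto simp: C_def V_def)
  moreover have "det C = 1"
    using deg lc by (intro det_unit_lower_triangular[of _ n]) (auto simp: C_def coeff_eq_0)
  ultimately show ?thesis
    using det_mult[of C n V] by (simp add: C_def V_def)
qed

definition gen_vandermonde :: "nat \<Rightarrow> (nat \<Rightarrow> 'a::comm_ring_1) \<Rightarrow> (nat \<Rightarrow> nat) \<Rightarrow> 'a" where
  "gen_vandermonde n x e = det (mat n n (\<lambda>(i,j). x j ^ e i))"

lemma gen_vandermonde_eq_sum: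
  "gen_vandermonde n x e = (\<Sum>p\<in>{p. p permutes {0..<n}}. signof p * (\<Prod>i=0..<n. x (p i) ^ e i))"
  unfolding gen_vandermonde_def det_def by (auto intro!: sum.cong prod.cong simp: permutes_def)

lemma gen_vandermonde_eq_0:
  assumes "\<not> inj_on e {0..<n}"
  shows "gen_vandermonde n x e = 0"
proof -
  from assms obtain i i' where "i < n" "i' < n" "i \<noteq> i'" "e i = e i'"
    unfolding inj_on_def by auto
  then show ?thesis
    unfolding gen_vandermonde_def by (intro det_identical_rows[of _ n i i']) (auto intro!: eq_vecI)
qed

lemma gen_vandermonde_rotate_permute:
  assumes q: "q permutes {0..<k}"
  shows "gen_vandermonde (k + N) x (\<lambda>i. if i < k then N + q i else i - k)
       = signof q * (-1) ^ (k * N) * det (mat (k + N) (k + N) (\<lambda>(i,j). x j ^ i))"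
proof -
  define W where "W = mat (k + N) (k + N) (\<lambda>(i,j). x j ^ (if i < k then i + N else i - k))"
  have "gen_vandermonde (k + N) x (\<lambda>i. if i < k then N + q i else i - k)
      = det (mat (k + N) (k + N) (\<lambda>(i,j). W $$ (q i, j)))"
    unfolding gen_vandermonde_def W_def
    using permutes_in_image[OF q] permutes_not_in[OF q]
    by (intro arg_cong[where f=det] eq_matI) (auto simp: add.commute[of N] trans_less_add1)
  also have "\<dots> = signof q * det W"
    using permutes_subset[OF q] by (intro det_permute_rows) (auto simp: W_def)
  also have "det W = (-1) ^ (k * N) * det (mat (k + N) (k + N) (\<lambda>(i,j). x j ^ i))"
  proof -
    have "det (mat (k + N) (k + N) (\<lambda>(i,j). x j ^ i)) = (-1) ^ (k * N) * det W"
      unfolding W_def by (subst det_swap_rows[of _ k N])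
        (auto intro!: arg_cong[where f="\<lambda>A. (-1) ^ (k * N) * det A"] eq_matI)
    then show ?thesis by (simp add: power_mult_distrib[symmetric])
  qed
  finally show ?thesis by simp
qed

definition falling_factorial_poly :: "nat \<Rightarrow> 'a::comm_ring_1 poly" where
  "falling_factorial_poly a = (\<Prod>l<a. [:- of_nat l, 1:])"

lemma degree_falling_factorial_poly [simp]:
  "degree (falling_factorial_poly a :: 'a::idom poly) = a"
  unfolding falling_factorial_poly_def by (subst degree_prod_sum_eq) auto

lemma coeff_falling_factorial_poly_self [simp]:
  "coeff (falling_factorial_poly a :: 'a::idom poly) a = 1"
proof -
  have "lead_coeff (falling_factorial_poly a :: 'a poly) = 1"
    unfolding falling_factorial_poly_def lead_coeff_prod by simp
  then show ?thesis by simp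
qed

lemma poly_falling_factorial_poly:
  "poly (falling_factorial_poly a) (of_nat y :: 'a::field_char_0) = fact a * of_nat (y choose a)"
  unfolding falling_factorial_poly_def poly_prod binomial_gbinomial gbinomial_mult_fact
  by (simp add: atLeast0LessThan)

definition inv_fact_mat :: "nat \<Rightarrow> nat \<Rightarrow> 'a::field_char_0 mat" where
  "inv_fact_mat k N = mat k k (\<lambda>(a,b). if a \<le> N + b then 1 / fact (N + b - a) else 0)"

(* The (a, b) entry is the monic falling factorial of degree a at N + b, divided by (N + b)!,
   so the determinant reduces to a Vandermonde determinant at the nodes N, ..., N + k - 1. *)
lemma det_inv_fact_mat:
  "det (inv_fact_mat k N :: 'a::field_char_0 mat) = (\<Prod>b<k. fact b / fact (N + b))"
proof -
  have entry: "(if a \<le> N + b then 1 / fact (N + b - a) else 0)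
      = poly (falling_factorial_poly a) (of_nat (N + b)) * (1 / fact (N + b) :: 'a)" for a b
    using poly_falling_factorial_poly[of a "N + b", where 'a='a] fact_binomial[of a "N + b", where 'a='a]
    by (auto simp del: of_nat_add)
  have "det (inv_fact_mat k N :: 'a mat)
      = (\<Prod>b<k. 1 / fact (N + b)) * det (mat k k (\<lambda>(a,b). poly (falling_factorial_poly a) (of_nat (N + b) :: 'a)))"
    unfolding inv_fact_mat_def entry by (rule det_mult_cols)
  also have "det (mat k k (\<lambda>(a,b). poly (falling_factorial_poly a) (of_nat (N + b) :: 'a)))
      = (\<Prod>a<k. \<Prod>b\<in>{a<..<k}. of_nat b - of_nat a)"
    by (subst det_poly_rows_monic) (simp_all add: det_vandermonde)
  finally show ?thesis
    by (simp add: prod_pairs_diff_of_nat prod.distrib[symmetric])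
qed

section \<open>The power series of the determinant\<close>

definition row_exponent :: "nat \<Rightarrow> nat \<Rightarrow> nat" where
  "row_exponent k i = (if i < k then i else i - k)"

definition Mmat_fps :: "nat \<Rightarrow> nat \<Rightarrow> (nat \<Rightarrow> real) \<Rightarrow> real fps" where
  "Mmat_fps n k x = (\<Sum>p\<in>{p. p permutes {0..<n}}.
     fps_const (signof p * (\<Prod>i=0..<n. x (p i) ^ row_exponent k i)) * (\<Prod>i<k. fps_exp (- x (p i))))"

lemma det_Mmat_eq_sum:
  assumes "k \<le> n"
  shows "det (Mmat n k m t) = (\<Sum>p\<in>{p. p permutes {0..<n}}.
      signof p * (\<Prod>i=0..<n. m (Suc (p i)) ^ row_exponent k i) * (\<Prod>i<k. exp (- m (Suc (p i)) * t)))"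
proof -
  have carrier: "Mmat n k m t \<in> carrier_mat n n" by (simp add: Mmat_def)
  show ?thesis
    unfolding det_def'[OF carrier]
  proof (intro sum.cong refl)
    fix p assume "p \<in> {p. p permutes {0..<n}}"
    then have "\<And>i. i < n \<Longrightarrow> p i < n" by (auto simp: permutes_def)
    then have "(\<Prod>i=0..<n. Mmat n k m t $$ (i, p i)) = (\<Prod>i=0..<n. m (Suc (p i)) ^ row_exponent k i
        * (if i < k then exp (- m (Suc (p i)) * t) else 1))"
      by (intro prod.cong) (auto simp: row_exponent_def Mmat_def)
    also have "\<dots> = (\<Prod>i=0..<n. m (Suc (p i)) ^ row_exponent k i) * (\<Prod>i<k. exp (- m (Suc (p i)) * t))"
    proof -
      have "{..<n} \<inter> {i. i < k} = {..<k}" using assms by auto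
      then show ?thesis by (simp add: prod.distrib prod.If_cases atLeast0LessThan)
    qed
    finally show "signof p * (\<Prod>i=0..<n. Mmat n k m t $$ (i, p i)) = signof p *
        (\<Prod>i=0..<n. m (Suc (p i)) ^ row_exponent k i) * (\<Prod>i<k. exp (- m (Suc (p i)) * t))" by simp
  qed
qed

lemma det_Mmat_has_fps_expansion:
  assumes "k \<le> n"
  shows "(\<lambda>t. det (Mmat n k m t)) has_fps_expansion Mmat_fps n k (\<lambda>j. m (Suc j))"
  unfolding det_Mmat_eq_sum[OF assms] Mmat_fps_def
  by (intro has_fps_expansion_sum has_fps_expansion_cmult_left has_fps_expansion_prod has_fps_expansion_exp)

(* In the expansion of det M(t) over permutations p, row i contributes the power x (p i) ^ row_exponent k i;
   for i < k the coefficient of t^c in exp (- x (p i) t) raises this exponent by c, and X records these c. *)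
definition shifted_exponent :: "nat \<Rightarrow> nat multiset \<Rightarrow> nat \<Rightarrow> nat" where
  "shifted_exponent k X i = row_exponent k i + count X i"

lemma fps_nth_Mmat_fps:
  assumes "k \<le> n"
  shows "fps_nth (Mmat_fps n k x) j = (\<Sum>X\<in>multisets_of_size {..<k} j.
           (-1) ^ j / (\<Prod>i<k. fact (count X i)) * gen_vandermonde n x (shifted_exponent k X))"
proof -
  let ?P = "{p. p permutes {0..<n}}"
  let ?M = "multisets_of_size {..<k} j"
  let ?C = "\<lambda>p. \<Prod>i=0..<n. x (p i) ^ row_exponent k i"
  have "fps_nth (Mmat_fps n k x) j
      = (\<Sum>X\<in>?M. \<Sum>p\<in>?P. signof p * ?C p * (\<Prod>i<k. (- x (p i)) ^ count X i / fact (count X i)))"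
    unfolding Mmat_fps_def fps_sum_nth fps_mult_left_const_nth fps_prod_nth'[OF finite_lessThan] fps_exp_nth
    by (simp add: sum_distrib_left sum.swap[of _ ?P])
  also have "\<dots> = (\<Sum>X\<in>?M. \<Sum>p\<in>?P. (-1) ^ j / (\<Prod>i<k. fact (count X i))
                      * (signof p * (\<Prod>i=0..<n. x (p i) ^ shifted_exponent k X i)))"
  proof (intro sum.cong refl)
    fix X p assume X: "X \<in> ?M"
    have "count X i = 0" if "k \<le> i" for i
      using multisets_of_size_subset[OF X] that by (auto simp: count_eq_zero_iff)
    then have "(\<Prod>i=0..<n. x (p i) ^ count X i) = (\<Prod>i<k. x (p i) ^ count X i)"
      using assms by (intro prod.mono_neutral_right) (auto simp: atLeast0LessThan)
    then have "(\<Prod>i=0..<n. x (p i) ^ shifted_exponent k X i) = ?C p * (\<Prod>i<k. x (p i) ^ count X i)"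
      by (simp add: shifted_exponent_def power_add prod.distrib)
    moreover have "(\<Sum>i<k. count X i) = j"
      using multisets_of_size_subset[OF X] multisets_of_size_size[OF X] by (simp add: sum_count_eq_size)
    ultimately show "signof p * ?C p * (\<Prod>i<k. (- x (p i)) ^ count X i / fact (count X i))
        = (-1) ^ j / (\<Prod>i<k. fact (count X i)) * (signof p * (\<Prod>i=0..<n. x (p i) ^ shifted_exponent k X i))"
      by (simp add: prod_neg_power_div_fact)
  qed
  also have "\<dots> = (\<Sum>X\<in>?M. (-1) ^ j / (\<Prod>i<k. fact (count X i)) * gen_vandermonde n x (shifted_exponent k X))"
    by (simp add: gen_vandermonde_eq_sum sum_distrib_left)
  finally show ?thesis .
qed

(* An exponent e < N in one of the first k rows would repeat the exponent of row k + e, which X leaves alone. *)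
lemma shifted_exponent_ge:
  assumes X: "set_mset X \<subseteq> {..<k}" and inj: "inj_on (shifted_exponent k X) {0..<k + N}"
    and i: "i < k"
  shows "N \<le> shifted_exponent k X i"
proof (rule ccontr)
  assume "\<not> N \<le> shifted_exponent k X i"
  then have "k + shifted_exponent k X i < k + N" by simp
  moreover have "count X (k + shifted_exponent k X i) = 0"
    using X by (auto simp: count_eq_zero_iff)
  then have "shifted_exponent k X (k + shifted_exponent k X i) = shifted_exponent k X i"
    by (simp add: shifted_exponent_def row_exponent_def)
  ultimately have "k + shifted_exponent k X i = i"
    using inj i by (auto dest: inj_onD)
  then show False using i by simp
qed

lemma shifted_exponents_sum_bound:
  assumes X: "X \<in> multisets_of_size {..<k} j" and inj: "inj_on (shifted_exponent k X) {0..<k + N}"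
  shows "k * N \<le> j" and "j = k * N \<Longrightarrow> shifted_exponent k X ` {..<k} = {N..<k + N}"
proof -
  let ?e = "shifted_exponent k X"
  have injk: "inj_on ?e {..<k}"
    using inj by (rule inj_on_subset) auto
  have "(\<Sum>i<k. N + i) \<le> \<Sum>(?e ` {..<k}) \<and> (\<Sum>(?e ` {..<k}) = (\<Sum>i<k. N + i) \<longrightarrow> ?e ` {..<k} = {N..<N + k})"
    using injk shifted_exponent_ge[OF multisets_of_size_subset[OF X] inj]
    by (intro sum_ge_sum_consecutive) (auto simp: card_image)
  moreover have "\<Sum>(?e ` {..<k}) = (\<Sum>i<k. ?e i)"
    using injk by (simp add: sum.reindex)
  also have "\<dots> = (\<Sum>i<k. i) + j"
    using multisets_of_size_subset[OF X] multisets_of_size_size[OF X]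
    by (simp add: shifted_exponent_def row_exponent_def sum.distrib sum_count_eq_size)
  moreover have "(\<Sum>i<k. N + i) = k * N + (\<Sum>i<k. i)"
    by (simp add: sum.distrib)
  ultimately show "k * N \<le> j" and "j = k * N \<Longrightarrow> ?e ` {..<k} = {N..<k + N}"
    by (auto simp: add.commute)
qed

section \<open>The leading coefficient\<close>

definition admissible_perms :: "nat \<Rightarrow> nat \<Rightarrow> (nat \<Rightarrow> nat) set" where
  "admissible_perms k N = {q. q permutes {0..<k} \<and> (\<forall>i<k. i \<le> N + q i)}"

definition leading_multisets :: "nat \<Rightarrow> nat \<Rightarrow> nat multiset set" where
  "leading_multisets k N =
     {X \<in> multisets_of_size {..<k} (k * N). inj_on (shifted_exponent k X) {0..<k + N}}"

definition perm_multiset :: "nat \<Rightarrow> nat \<Rightarrow> (nat \<Rightarrow> nat) \<Rightarrow> nat multiset" where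
  "perm_multiset k N q = (\<Sum>i<k. replicate_mset (N + q i - i) i)"

lemma count_perm_multiset:
  "count (perm_multiset k N q) a = (if a < k then N + q a - a else 0)"
  by (simp add: perm_multiset_def count_sum)

lemma shifted_exponent_perm_multiset:
  assumes "\<forall>i<k. i \<le> N + q i"
  shows "shifted_exponent k (perm_multiset k N q) = (\<lambda>i. if i < k then N + q i else i - k)"
  using assms by (auto simp: shifted_exponent_def row_exponent_def count_perm_multiset)

lemma perm_multiset_in_leading_multisets:
  assumes "q \<in> admissible_perms k N"
  shows "perm_multiset k N q \<in> leading_multisets k N"
proof -
  from assms have q: "q permutes {0..<k}" and qc: "\<forall>i<k. i \<le> N + q i"
    by (auto simp: admissible_perms_def)
  have "(\<Sum>i<k. q i) = (\<Sum>i<k. i)"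
    using sum.permute[OF q, of id] by (simp add: atLeast0LessThan)
  moreover have "(\<Sum>i<k. N + q i - i) + (\<Sum>i<k. i) = (\<Sum>i<k. N + q i)"
    using qc by (simp add: sum.distrib[symmetric])
  ultimately have "size (perm_multiset k N q) = k * N"
    by (simp add: perm_multiset_def sum.distrib)
  moreover have "set_mset (perm_multiset k N q) \<subseteq> {..<k}"
    by (auto simp: count_perm_multiset simp flip: count_greater_zero_iff split: if_splits)
  moreover have "inj_on (shifted_exponent k (perm_multiset k N q)) {0..<k + N}"
  proof (rule inj_onI)
    fix a b assume "a \<in> {0..<k + N}" "b \<in> {0..<k + N}"
      and "shifted_exponent k (perm_multiset k N q) a = shifted_exponent k (perm_multiset k N q) b"
    then show "a = b"
      using permutes_inj[OF q] unfolding shifted_exponent_perm_multiset[OF qc]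
      by (auto dest: injD split: if_splits)
  qed
  ultimately show ?thesis
    by (simp add: leading_multisets_def multisets_of_size_def)
qed

lemma leading_multiset_eq_perm_multiset:
  assumes "X \<in> leading_multisets k N"
  defines "q \<equiv> \<lambda>i. if i < k then shifted_exponent k X i - N else i"
  shows "q \<in> admissible_perms k N" and "perm_multiset k N q = X"
proof -
  from assms have X: "X \<in> multisets_of_size {..<k} (k * N)"
    and inj: "inj_on (shifted_exponent k X) {0..<k + N}"
    by (auto simp: leading_multisets_def)
  note ge = shifted_exponent_ge[OF multisets_of_size_subset[OF X] inj]
  have "q ` {0..<k} = (\<lambda>v. v - N) ` (shifted_exponent k X ` {..<k})"
    by (auto simp: q_def image_iff atLeast0LessThan)
  also have "\<dots> = {0..<k}"
    unfolding shifted_exponents_sum_bound(2)[OF X inj refl]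
    by (auto simp: image_iff intro!: bexI[where x="_ + N"])
  finally have "q ` {0..<k} = {0..<k}" .
  moreover have "inj_on q {0..<k}"
  proof (rule inj_onI)
    fix a b assume ab: "a \<in> {0..<k}" "b \<in> {0..<k}" and "q a = q b"
    then have "shifted_exponent k X a = shifted_exponent k X b"
      using ge[of a] ge[of b] by (simp add: q_def)
    then show "a = b" using inj ab by (auto dest: inj_onD)
  qed
  ultimately have "q permutes {0..<k}"
    by (intro bij_imp_permutes) (auto simp: bij_betw_def q_def)
  then show "q \<in> admissible_perms k N"
    by (auto simp: admissible_perms_def q_def shifted_exponent_def row_exponent_def)
  show "perm_multiset k N q = X"
  proof (rule multiset_eqI)
    fix a
    have "count X a = 0" if "k \<le> a"
      using multisets_of_size_subset[OF X] that by (auto simp: count_eq_zero_iff)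
    then show "count (perm_multiset k N q) a = count X a"
      using ge[of a] by (auto simp: count_perm_multiset q_def shifted_exponent_def row_exponent_def)
  qed
qed

lemma bij_betw_perm_multiset:
  "bij_betw (perm_multiset k N) (admissible_perms k N) (leading_multisets k N)"
proof (rule bij_betw_byWitness[where f'="\<lambda>X i. if i < k then shifted_exponent k X i - N else i"])
  show "\<forall>q\<in>admissible_perms k N.
      (\<lambda>i. if i < k then shifted_exponent k (perm_multiset k N q) i - N else i) = q"
    by (auto simp: admissible_perms_def shifted_exponent_perm_multiset permutes_not_in)
  show "\<forall>X\<in>leading_multisets k N.
      perm_multiset k N (\<lambda>i. if i < k then shifted_exponent k X i - N else i) = X"
    using leading_multiset_eq_perm_multiset(2) by blast
  show "perm_multiset k N ` admissible_perms k N \<subseteq> leading_multisets k N"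
    using perm_multiset_in_leading_multisets by blast
  show "(\<lambda>X i. if i < k then shifted_exponent k X i - N else i) ` leading_multisets k N
      \<subseteq> admissible_perms k N"
    using leading_multiset_eq_perm_multiset(1) by blast
qed

lemma leading_term_perm_multiset:
  fixes x :: "nat \<Rightarrow> real"
  assumes "q \<in> admissible_perms k N"
  shows "(-1) ^ (k * N) / (\<Prod>i<k. fact (count (perm_multiset k N q) i))
            * gen_vandermonde (k + N) x (shifted_exponent k (perm_multiset k N q))
       = det (mat (k + N) (k + N) (\<lambda>(i,j). x j ^ i)) * (signof q * (\<Prod>i=0..<k. inv_fact_mat k N $$ (i, q i)))"
proof -
  from assms have q: "q permutes {0..<k}" and qc: "\<forall>i<k. i \<le> N + q i"
    by (auto simp: admissible_perms_def)
  let ?P = "\<Prod>i<k. fact (N + q i - i) :: real"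
  let ?G = "gen_vandermonde (k + N) x (shifted_exponent k (perm_multiset k N q))"
  let ?V = "det (mat (k + N) (k + N) (\<lambda>(i,j). x j ^ i))"
  have "(\<Prod>i=0..<k. inv_fact_mat k N $$ (i, q i)) = (\<Prod>i<k. 1 / fact (N + q i - i))"
    unfolding atLeast0LessThan
  proof (rule prod.cong)
    fix i assume "i \<in> {..<k}"
    then show "inv_fact_mat k N $$ (i, q i) = 1 / fact (N + q i - i)"
      using qc permutes_in_image[OF q, of i] by (simp add: inv_fact_mat_def)
  qed simp
  then have A: "(\<Prod>i=0..<k. inv_fact_mat k N $$ (i, q i)) = 1 / ?P"
    by (simp add: prod_dividef)
  have C: "(\<Prod>i<k. fact (count (perm_multiset k N q) i)) = ?P"
    by (simp add: count_perm_multiset)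
  have "(-1) ^ (k * N) * ?G = ((-1) ^ (k * N) * (-1) ^ (k * N)) * (signof q * ?V)"
    unfolding shifted_exponent_perm_multiset[OF qc] gen_vandermonde_rotate_permute[OF q]
    by (simp only: mult_ac)
  then have G: "(-1) ^ (k * N) * ?G = signof q * ?V"
    by (simp add: power_mult_distrib[symmetric])
  have "(-1) ^ (k * N) / (\<Prod>i<k. fact (count (perm_multiset k N q) i)) * ?G = ((-1) ^ (k * N) * ?G) / ?P"
    unfolding C by simp
  also have "\<dots> = ?V * (signof q * (1 / ?P))"
    unfolding G by simp
  finally show ?thesis unfolding A .
qed

lemma fps_nth_Mmat_fps_leading:
  fixes x :: "nat \<Rightarrow> real"
  shows "fps_nth (Mmat_fps (k + N) k x) (k * N)
       = det (mat (k + N) (k + N) (\<lambda>(i,j). x j ^ i)) * (\<Prod>b<k. fact b / fact (N + b))"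
proof -
  let ?g = "\<lambda>X. (-1) ^ (k * N) / (\<Prod>i<k. fact (count X i)) * gen_vandermonde (k + N) x (shifted_exponent k X)"
  let ?h = "\<lambda>q. signof q * (\<Prod>i=0..<k. inv_fact_mat k N $$ (i, q i) :: real)"
  let ?V = "det (mat (k + N) (k + N) (\<lambda>(i,j). x j ^ i))"
  have "fps_nth (Mmat_fps (k + N) k x) (k * N) = sum ?g (multisets_of_size {..<k} (k * N))"
    by (simp add: fps_nth_Mmat_fps)
  also have "\<dots> = sum ?g (leading_multisets k N)"
    by (rule sum.mono_neutral_right) (auto simp: leading_multisets_def gen_vandermonde_eq_0)
  also have "\<dots> = (\<Sum>q\<in>admissible_perms k N. ?g (perm_multiset k N q))"
    by (rule sum.reindex_bij_betw[OF bij_betw_perm_multiset, symmetric])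
  also have "\<dots> = (\<Sum>q\<in>admissible_perms k N. ?V * ?h q)"
    by (intro sum.cong refl leading_term_perm_multiset)
  also have "\<dots> = ?V * sum ?h (admissible_perms k N)"
    by (rule sum_distrib_left[symmetric])
  also have "sum ?h (admissible_perms k N) = sum ?h {q. q permutes {0..<k}}"
  proof (rule sum.mono_neutral_left)
    show "\<forall>q\<in>{q. q permutes {0..<k}} - admissible_perms k N. ?h q = 0"
    proof
      fix q assume "q \<in> {q. q permutes {0..<k}} - admissible_perms k N"
      then obtain i where "i < k" "N + q i < i" and "q permutes {0..<k}"
        by (auto simp: admissible_perms_def)
      then have "inv_fact_mat k N $$ (i, q i) = (0::real)"
        by (simp add: inv_fact_mat_def permutes_in_image)
      with \<open>i < k\<close> have "(\<Prod>i=0..<k. inv_fact_mat k N $$ (i, q i)) = (0::real)"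
        by (intro prod_zero[OF finite_atLeastLessThan bexI[of _ i]]) auto
      then show "?h q = 0" by simp
    qed
  qed (auto simp: admissible_perms_def finite_permutations)
  also have "sum ?h {q. q permutes {0..<k}} = det (inv_fact_mat k N)"
    by (simp add: det_def inv_fact_mat_def)
  finally show ?thesis by (simp add: det_inv_fact_mat)
qed

lemma eps_kn_eq: "k \<le> n \<Longrightarrow> eps_kn k n = (-1) ^ (\<Sum>i<n. i)"
  using sum_lessThan_add[of k "n - k"]
  by (simp add: eps_kn_def power_add minus_one_power_sum_lessThan)

lemma Vand_eq_det_vandermonde:
  "Vand n m = (-1) ^ (\<Sum>i<n. i) * det (mat n n (\<lambda>(i,j). m (Suc j) ^ i))"
proof -
  have "Vand n m = (\<Prod>i<n. \<Prod>j\<in>{Suc i<..n}. m (Suc i) - m j)"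
    unfolding Vand_def image_Suc_lessThan[symmetric] by (simp add: prod.reindex)
  also have "\<dots> = (\<Prod>i<n. \<Prod>j\<in>{i<..<n}. m (Suc i) - m (Suc j))"
  proof (rule prod.cong[OF refl])
    fix i
    have "{Suc i<..n} = Suc ` {i<..<n}"
      by (auto simp: image_iff Bex_def) presburger
    then show "(\<Prod>j\<in>{Suc i<..n}. m (Suc i) - m j) = (\<Prod>j\<in>{i<..<n}. m (Suc i) - m (Suc j))"
      by (simp add: prod.reindex)
  qed
  finally show ?thesis
    by (simp add: prod_pairs_diff_swap det_vandermonde)
qed

lemma c0_div_fact:
  "c0 k n / fact (k * (n - k)) = (\<Prod>b<k. fact b / fact (n - k + b) :: real)"
proof -
  have "(\<Prod>i\<in>{1..k}. fact (i - 1) / fact (n - k + i - 1))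
      = (\<Prod>i\<in>Suc ` {..<k}. fact (i - 1) / fact (n - k + i - 1) :: real)"
    by (simp add: image_Suc_lessThan)
  then show ?thesis
    by (simp add: c0_def prod.reindex)
qed

theorem mainTheorem7:
  fixes n k :: nat and m :: "nat \<Rightarrow> real"
  assumes "n \<ge> 2" and "0 < k" and "k \<le> n div 2"
  shows "\<exists>F. (\<lambda>t. Determinant.det (Mmat n k m t)) has_fps_expansion F
           \<and> (\<forall>j < k * (n - k). fps_nth F j = 0)
           \<and> fps_nth F (k * (n - k))
               = eps_kn k n * Vand n m / fact (k * (n - k)) * c0 k n"
proof -
  have "k \<le> n" using assms(3) by linarith
  then obtain N where n: "n = k + N" using le_Suc_ex by blast
  let ?x = "\<lambda>j. m (Suc j)"
  let ?F = "Mmat_fps n k ?x"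
  have "fps_nth ?F j = 0" if j: "j < k * (n - k)" for j
  proof -
    have "gen_vandermonde n ?x (shifted_exponent k X) = 0" if "X \<in> multisets_of_size {..<k} j" for X
      using shifted_exponents_sum_bound(1)[OF that, of N] j by (intro gen_vandermonde_eq_0) (auto simp: n)
    then show ?thesis by (simp add: fps_nth_Mmat_fps[OF \<open>k \<le> n\<close>])
  qed
  moreover have "fps_nth ?F (k * (n - k)) = eps_kn k n * Vand n m / fact (k * (n - k)) * c0 k n"
  proof -
    have "eps_kn k n * Vand n m = det (mat n n (\<lambda>(i,j). ?x j ^ i))"
      using \<open>k \<le> n\<close> by (simp add: eps_kn_eq Vand_eq_det_vandermonde power_mult_distrib[symmetric])
    then show ?thesis
      using fps_nth_Mmat_fps_leading[of k N ?x] c0_div_fact[of k n] by (simp add: n field_simps)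
  qed
  ultimately show ?thesis
    using det_Mmat_has_fps_expansion[OF \<open>k \<le> n\<close>] by blast
qed

end
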